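(* Let $T_{init}$ be the number of nodes of the initial tree. The expected optimization time of (1+1) GP-single on MO-WMAJORITY is $O(T_{init}+n\log n)$.
   Context: Fix an integer $n\ge 1$ and real weights $w_1\ge w_2\ge\dots\ge w_n>0$. The terminal set is $T=\{x_1,\bar x_1,\dots,x_n,\bar x_n\}$ ($\bar x_i$ is the complement of $x_i$; $x_i$ is called positive). A syntax tree is either the empty tree or a rooted ordered binary tree whose inner nodes are all labelled by the binary function $J$ (join, exactly two ordered children) and whose leaves are labelled by elements of $T$. The complexity $C(X)$ is the number of nodes of $X$ (0 for the empty tree). The leaf list $l$ of $X$ is the sequence of leaf labels in an inorder traversal. WMAJORITY: WMAJORITY$(X)=\sum w_i$ over all $i$ such that $x_i$ occurs in $l$ at least once and at least as often as $\bar x_i$. MO-WMAJORITY$(X)=(\mathrm{WMAJORITY}(X),C(X))$, WMAJORITY to be maximized and $C$ minimized. Mutation (HVL-Prime applied $k$ times): each application chooses uniformly at random one of three operations. Substitute: replace a uniformly random leaf by a uniformly random $u\in T$. Insert: choose a uniformly random node $v$ and uniformly random $u\in T$, replace $v$ by a $J$-node with children $u$ and $v$ in uniformly random order (inserting into the empty tree yields the single leaf $u$). Delete: choose a uniformly random leaf $v$ with parent $p$ and sibling $u$, replace $p$ by $u$ (deleting $p$ and $v$; deleting the only leaf of a one-leaf tree yields the empty tree). Single-operation mutation uses $k=1$. (1+1) GP-single on MO-$F$: start with an initial tree $X$; in each iteration let $Y$ be $X$ mutated with $k=1$, and set $X:=Y$ iff $F(Y)>F(X)$, or $F(Y)=F(X)$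 and $C(Y)\le C(X)$. Expected optimization time: expected number of iterations (fitness evaluations) until the current solution is for the first time optimal, i.e. has maximum possible $F$-value and, among such trees, minimum complexity. *)

theory Defs
  imports "HOL-Probability.Probability"
begin

text \<open>Literals: (i, True) is the positive variable x_i, (i, False) its complement.\<close>
type_synonym lit = "nat \<times> bool"

text \<open>Non-empty syntax trees: leaves labelled by literals, inner nodes are J.
  A syntax tree (possibly empty) is an stree option, None being the empty tree.\<close>
datatype stree = Leaf lit | J stree stree

definition terminals :: "nat \<Rightarrow> lit set" where
  "terminals n = {(i, b). i \<in> {1..n}}"

fun leaves :: "stree \<Rightarrow> lit list" where
  "leaves (Leaf a) = [a]"
| "leaves (J l r) = leaves l @ leaves r"

fun nnodes :: "stree \<Rightarrow> nat" where
  "nnodes (Leaf a) = 1"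
| "nnodes (J l r) = 1 + nnodes l + nnodes r"

definition nleaves :: "stree \<Rightarrow> nat" where
  "nleaves t = length (leaves t)"

definition cplx :: "stree option \<Rightarrow> nat" where
  "cplx X = (case X of None \<Rightarrow> 0 | Some t \<Rightarrow> nnodes t)"

definition leaf_list :: "stree option \<Rightarrow> lit list" where
  "leaf_list X = (case X of None \<Rightarrow> [] | Some t \<Rightarrow> leaves t)"

definition over_T :: "nat \<Rightarrow> stree option \<Rightarrow> bool" where
  "over_T n X \<longleftrightarrow> set (leaf_list X) \<subseteq> terminals n"

definition wmaj :: "nat \<Rightarrow> (nat \<Rightarrow> real) \<Rightarrow> stree option \<Rightarrow> real" where
  "wmaj n w X = (\<Sum>i\<in>{1..n}.
      if count_list (leaf_list X) (i, True) \<ge> 1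
       \<and> count_list (leaf_list X) (i, True) \<ge> count_list (leaf_list X) (i, False)
      then w i else 0)"

text \<open>Replace the k-th leaf (inorder, 0-based) by u.\<close>
fun subst_leaf :: "nat \<Rightarrow> lit \<Rightarrow> stree \<Rightarrow> stree" where
  "subst_leaf k u (Leaf a) = Leaf u"
| "subst_leaf k u (J l r) =
     (if k < nleaves l then J (subst_leaf k u l) r
      else J l (subst_leaf (k - nleaves l) u r))"

text \<open>Insert at the k-th node (preorder, 0-based): replace it by J with children
  u and v; if b then u is the left child, else the right child.\<close>
fun ins_at :: "nat \<Rightarrow> lit \<Rightarrow> bool \<Rightarrow> stree \<Rightarrow> stree" where
  "ins_at k u b (Leaf a) =
     (if b then J (Leaf u) (Leaf a) else J (Leaf a) (Leaf u))"
| "ins_at k u b (J l r) =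
     (if k = 0 then (if b then J (Leaf u) (J l r) else J (J l r) (Leaf u))
      else if k - 1 < nnodes l then J (ins_at (k - 1) u b l) r
      else J l (ins_at (k - 1 - nnodes l) u b r))"

text \<open>Delete the k-th leaf (inorder, 0-based): its parent is replaced by its sibling;
  deleting the only leaf yields the empty tree.\<close>
fun del_leaf :: "nat \<Rightarrow> stree \<Rightarrow> stree option" where
  "del_leaf k (Leaf a) = None"
| "del_leaf k (J l r) =
     (if k < nleaves l then
        (case del_leaf k l of None \<Rightarrow> Some r | Some l' \<Rightarrow> Some (J l' r))
      else
        (case del_leaf (k - nleaves l) r of None \<Rightarrow> Some l | Some r' \<Rightarrow> Some (J l r')))"

text \<open>One application of HVL-Prime (k = 1).  Substitution and deletion on the
  empty tree (which has no leaves) leave it unchanged.\<close>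
definition hvl_prime :: "nat \<Rightarrow> stree option \<Rightarrow> stree option pmf" where
  "hvl_prime n X = do {
     op \<leftarrow> pmf_of_set {0::nat, 1, 2};
     (if op = 0 then
        (case X of None \<Rightarrow> return_pmf None
         | Some t \<Rightarrow> do {
             k \<leftarrow> pmf_of_set {..<nleaves t};
             u \<leftarrow> pmf_of_set (terminals n);
             return_pmf (Some (subst_leaf k u t)) })
      else if op = 1 then
        (case X of None \<Rightarrow> do { u \<leftarrow> pmf_of_set (terminals n); return_pmf (Some (Leaf u)) }
         | Some t \<Rightarrow> do {
             k \<leftarrow> pmf_of_set {..<nnodes t};
             u \<leftarrow> pmf_of_set (terminals n);
             b \<leftarrow> pmf_of_set (UNIV :: bool set);
             return_pmf (Some (ins_at k u b t)) })
      else
        (case X of None \<Rightarrow> return_pmf None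
         | Some t \<Rightarrow> do {
             k \<leftarrow> pmf_of_set {..<nleaves t};
             return_pmf (del_leaf k t) }))
   }"

definition accept :: "nat \<Rightarrow> (nat \<Rightarrow> real) \<Rightarrow> stree option \<Rightarrow> stree option \<Rightarrow> bool" where
  "accept n w X Y \<longleftrightarrow> wmaj n w Y > wmaj n w X
     \<or> (wmaj n w Y = wmaj n w X \<and> cplx Y \<le> cplx X)"

definition gp_step :: "nat \<Rightarrow> (nat \<Rightarrow> real) \<Rightarrow> stree option \<Rightarrow> stree option pmf" where
  "gp_step n w X = map_pmf (\<lambda>Y. if accept n w X Y then Y else X) (hvl_prime n X)"

definition optimal :: "nat \<Rightarrow> (nat \<Rightarrow> real) \<Rightarrow> stree option \<Rightarrow> bool" where
  "optimal n w X \<longleftrightarrow>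
     (\<forall>Y. over_T n Y \<longrightarrow> wmaj n w Y \<le> wmaj n w X) \<and>
     (\<forall>Y. over_T n Y \<longrightarrow> wmaj n w Y = wmaj n w X \<longrightarrow> cplx X \<le> cplx Y)"

text \<open>The process stopped at the first optimal tree: distribution after t iterations.\<close>
definition stopped_run :: "nat \<Rightarrow> (nat \<Rightarrow> real) \<Rightarrow> stree option \<Rightarrow> nat \<Rightarrow> stree option pmf" where
  "stopped_run n w X0 t =
     ((\<lambda>p. bind_pmf p (\<lambda>X. if optimal n w X then return_pmf X else gp_step n w X)) ^^ t)
       (return_pmf X0)"

text \<open>Expected optimization time E[T] = sum over t of Pr[T > t], where
  T is the first t with X_t optimal; Pr[T > t] = Pr[stopped chain not optimal at t].\<close>
definition opt_time :: "nat \<Rightarrow> (nat \<Rightarrow> real) \<Rightarrow> stree option \<Rightarrow> ennreal" where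
  "opt_time n w X0 =
     (\<Sum>t. ennreal (measure_pmf.prob (stopped_run n w X0 t) {X. \<not> optimal n w X}))"

end

theory Submission
  imports Defs "HOL-Analysis.Harmonic_Numbers"
begin

(* Both objectives depend on a tree only through the multiset M of its leaf labels:
   the fitness is the total weight of the expressed variables (x_i present and at
   least as frequent as its complement), and a tree with L > 0 leaves has 2L - 1
   nodes.  We track two integer quantities of M: the number R of expressed
   variables and the excess K = |M| - R.  The state is optimal iff K = 0 and R = n.

   (1) Each mutation removes at most one and adds at most one leaf; with positive
       weights an accepted offspring therefore never lowers R nor raises K.
   (2) If K > 0, at least K/2 leaves can be deleted without loss of fitness, so K
       drops with probability >= K/(6L); if K = 0 and R < n, inserting a missing
       x_i raises R with probability >= (n - R)/(6n).
   (3) Hence the potential V = 6K + 6n H(K) + 6n H(n - R) (H = harmonic numbers)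
       drops by at least 1 in expectation in every non-optimal step; an additive
       drift argument on the stopped process bounds the expected optimization
       time by V of the initial tree, which is O(T_init + n log n). *)

lemma leaves_nonempty: "leaves t \<noteq> []"
  by (induction t) auto

lemma nnodes_leaves: "nnodes t = 2 * length (leaves t) - 1"
proof (induction t)
  case (J l r)
  have "length (leaves l) \<ge> 1" "length (leaves r) \<ge> 1"
    using leaves_nonempty[of l] leaves_nonempty[of r] by (auto simp: Suc_le_eq)
  with J show ?case by simp
qed simp

lemma leaves_subst_leaf:
  "k < length (leaves t) \<Longrightarrow> leaves (subst_leaf k u t) = (leaves t)[k := u]"
  by (induction t arbitrary: k) (auto simp: nleaves_def list_update_append)

lemma mset_leaves_ins_at: "mset (leaves (ins_at k u b t)) = add_mset u (mset (leaves t))"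
  by (induction t arbitrary: k) auto

lemma leaf_list_del_leaf:
  "k < length (leaves t) \<Longrightarrow>
   leaf_list (del_leaf k t) = take k (leaves t) @ drop (Suc k) (leaves t)"
proof (induction t arbitrary: k)
  case (J l r)
  have left: "leaf_list (case d of None \<Rightarrow> Some r | Some l' \<Rightarrow> Some (J l' r)) = leaf_list d @ leaves r"
    and right: "leaf_list (case d of None \<Rightarrow> Some l | Some r' \<Rightarrow> Some (J l r')) = leaves l @ leaf_list d"
    for d by (cases d; simp add: leaf_list_def)+
  show ?case
  proof (cases "k < length (leaves l)")
    case True
    then show ?thesis using J.IH(1)[OF True] by (simp add: nleaves_def left)
  next
    case False
    then have "k - length (leaves l) < length (leaves r)" using J.prems by simp
    with False show ?thesis using J.IH(2) by (simp add: nleaves_def right Suc_diff_le)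
  qed
qed (simp add: leaf_list_def)

lemma mset_del_leaf:
  assumes "k < length (leaves t)"
  shows "mset (leaf_list (del_leaf k t)) = mset (leaves t) - {#leaves t ! k#}"
proof -
  have "mset (leaves t) = add_mset (leaves t ! k) (mset (take k (leaves t) @ drop (Suc k) (leaves t)))"
    by (subst id_take_nth_drop[OF assms]) simp
  then show ?thesis using leaf_list_del_leaf[OF assms] by simp
qed

section \<open>The leaf multiset and its expressed variables\<close>

definition leaf_mset :: "stree option \<Rightarrow> lit multiset" where
  "leaf_mset X = mset (leaf_list X)"

definition pos_count :: "lit multiset \<Rightarrow> nat \<Rightarrow> nat" where
  "pos_count M i = count M (i, True)"

definition neg_count :: "lit multiset \<Rightarrow> nat \<Rightarrow> nat" where
  "neg_count M i = count M (i, False)"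

definition expressed :: "lit multiset \<Rightarrow> nat \<Rightarrow> bool" where
  "expressed M i \<longleftrightarrow> 1 \<le> pos_count M i \<and> neg_count M i \<le> pos_count M i"

definition expressed_vars :: "nat \<Rightarrow> lit multiset \<Rightarrow> nat set" where
  "expressed_vars n M = {i \<in> {1..n}. expressed M i}"

definition num_expressed :: "nat \<Rightarrow> lit multiset \<Rightarrow> nat" where
  "num_expressed n M = card (expressed_vars n M)"

definition weight :: "nat \<Rightarrow> (nat \<Rightarrow> real) \<Rightarrow> lit multiset \<Rightarrow> real" where
  "weight n w M = sum w (expressed_vars n M)"

text \<open>The excess counts the leaves not needed to express the expressed variables.\<close>
definition excess :: "nat \<Rightarrow> lit multiset \<Rightarrow> nat" where
  "excess n M = size M - num_expressed n M"

definition nodes_of_leaves :: "nat \<Rightarrow> nat" where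
  "nodes_of_leaves L = (if L = 0 then 0 else 2 * L - 1)"

lemma expressed_vars_subset: "expressed_vars n M \<subseteq> {1..n}"
  by (auto simp: expressed_vars_def)

lemma finite_expressed_vars [simp]: "finite (expressed_vars n M)"
  by (simp add: expressed_vars_def)

lemma leaf_mset_None: "leaf_mset None = {#}"
  and leaf_mset_Some: "leaf_mset (Some t) = mset (leaves t)"
  by (simp_all add: leaf_mset_def leaf_list_def)

lemma wmaj_eq_weight: "wmaj n w X = weight n w (leaf_mset X)"
proof -
  have "wmaj n w X = (\<Sum>i\<in>{1..n}. if expressed (leaf_mset X) i then w i else 0)"
    by (simp add: wmaj_def expressed_def pos_count_def neg_count_def leaf_mset_def count_mset)
  also have "\<dots> = sum w (expressed_vars n (leaf_mset X))"
    unfolding expressed_vars_def by (rule sum.inter_filter[symmetric]) simp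
  finally show ?thesis by (simp add: weight_def)
qed

lemma cplx_eq_nodes_of_leaves: "cplx X = nodes_of_leaves (size (leaf_mset X))"
  by (cases X) (auto simp: cplx_def leaf_mset_def leaf_list_def nnodes_leaves
      nodes_of_leaves_def leaves_nonempty)

lemma nodes_of_leaves_le_iff: "nodes_of_leaves a \<le> nodes_of_leaves b \<longleftrightarrow> a \<le> b"
  by (auto simp: nodes_of_leaves_def)

text \<open>Literals over distinct variables are distinct, so the leaf counts over any finite set
  of variables add up to at most the number of leaves.\<close>
lemma sum_counts_le_size:
  "finite I \<Longrightarrow> (\<Sum>i\<in>I. pos_count M i + neg_count M i) \<le> size M"
proof (induction M)
  case empty
  then show ?case by (simp add: pos_count_def neg_count_def)
next
  case (add x M)
  obtain j c where x: "x = (j, c)" by (cases x)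
  have "(\<Sum>i\<in>I. pos_count (add_mset x M) i + neg_count (add_mset x M) i)
        = (\<Sum>i\<in>I. pos_count M i + neg_count M i) + (\<Sum>i\<in>I. if i = j then 1 else 0)"
    by (cases c) (auto simp: x pos_count_def neg_count_def sum.distrib[symmetric] intro!: sum.cong)
  also have "(\<Sum>i\<in>I. if i = j then 1 else 0) \<le> (1::nat)"
    using add.prems by (simp add: sum.delta)
  finally show ?case using add by simp
qed

text \<open>Every expressed variable needs at least one leaf.\<close>
lemma num_expressed_le_counts:
  "num_expressed n M \<le> (\<Sum>i\<in>expressed_vars n M. pos_count M i + neg_count M i)"
proof -
  have "num_expressed n M = (\<Sum>i\<in>expressed_vars n M. 1)" by (simp add: num_expressed_def)
  also have "\<dots> \<le> (\<Sum>i\<in>expressed_vars n M. pos_count M i + neg_count M i)"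
    by (rule sum_mono) (auto simp: expressed_vars_def expressed_def)
  finally show ?thesis .
qed

lemma num_expressed_le_size: "num_expressed n M \<le> size M"
  using num_expressed_le_counts sum_counts_le_size[OF finite_expressed_vars] le_trans by blast

lemma num_expressed_le_n: "num_expressed n M \<le> n"
  using card_mono[OF _ expressed_vars_subset, of n M] by (simp add: num_expressed_def)

lemma size_eq_excess_plus: "size M = excess n M + num_expressed n M"
  using num_expressed_le_size[of n M] by (simp add: excess_def)

lemma no_excess_unexpressed_absent:
  assumes "excess n M = 0" "i \<in> {1..n}" "i \<notin> expressed_vars n M"
  shows "pos_count M i = 0 \<and> neg_count M i = 0"
proof -
  let ?E = "expressed_vars n M"
  have "pos_count M i + neg_count M i + (\<Sum>j\<in>?E. pos_count M j + neg_count M j)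
        = (\<Sum>j\<in>insert i ?E. pos_count M j + neg_count M j)"
    using assms(3) by simp
  also have "\<dots> \<le> size M" by (rule sum_counts_le_size) simp
  finally show ?thesis
    using num_expressed_le_counts[of n M] size_eq_excess_plus[of M n] assms(1) by linarith
qed

section \<open>Locality: accepted mutations never lose expressed variables\<close>

definition same_outside :: "nat set \<Rightarrow> lit multiset \<Rightarrow> lit multiset \<Rightarrow> bool" where
  "same_outside S M M' \<longleftrightarrow> (\<forall>i b. i \<notin> S \<longrightarrow> count M' (i, b) = count M (i, b))"

lemma expressed_vars_same_outside:
  assumes "same_outside S M M'"
  shows "expressed_vars n M' - S = expressed_vars n M - S"
proof -
  have "pos_count M' i = pos_count M i \<and> neg_count M' i = neg_count M i" if "i \<notin> S" for i
    using assms that by (simp add: same_outside_def pos_count_def neg_count_def)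
  then show ?thesis by (auto simp: expressed_vars_def expressed_def)
qed

lemma num_expressed_split:
  "num_expressed n M = card (expressed_vars n M - S) + card (expressed_vars n M \<inter> S)"
proof -
  have split: "expressed_vars n M = (expressed_vars n M - S) \<union> (expressed_vars n M \<inter> S)" by auto
  show ?thesis unfolding num_expressed_def by (subst split, rule card_Un_disjoint) auto
qed

lemma weight_split:
  "weight n w M = sum w (expressed_vars n M - S) + sum w (expressed_vars n M \<inter> S)"
proof -
  have split: "expressed_vars n M = (expressed_vars n M - S) \<union> (expressed_vars n M \<inter> S)" by auto
  show ?thesis unfolding weight_def by (subst split, rule sum.union_disjoint) auto
qed

lemma card_less_imp_psubset_in_pair:
  assumes "finite S" "card S \<le> 2" "A \<subseteq> S" "A' \<subseteq> S" "card A' < card A"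
  shows "A' \<subset> A"
proof (cases "card A = 2")
  case True
  then have "A = S" using assms card_subset_eq[of S A] card_mono[of S A] by simp
  then show ?thesis using assms by auto
next
  case False
  then have "card A \<le> 1" using assms card_mono[of S A] by simp
  then have "card A' = 0" using assms by simp
  moreover have "finite A'" using assms finite_subset by blast
  ultimately have "A' = {}" by simp
  then show ?thesis using assms by auto
qed

lemma card_le_imp_subset_in_singleton:
  assumes "finite S" "card S \<le> 1" "A \<subseteq> S" "A' \<subseteq> S" "card A' \<le> card A"
  shows "A' \<subseteq> A"
proof (cases "A = {}")
  case True
  then have "card A' = 0" using assms by simp
  moreover have "finite A'" using assms finite_subset by blast
  ultimately have "A' = {}" by simp
  then show ?thesis by simp
next
  case False
  have "finite A" using assms finite_subset by blast
  with False have "card A \<noteq> 0" by simp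
  moreover have "card A \<le> card S" using assms card_mono by blast
  ultimately have "card A = card S" using assms(2) by linarith
  then have "A = S" using card_subset_eq[OF assms(1,3)] by simp
  then show ?thesis using assms by auto
qed

lemma sum_psubset_less:
  fixes w :: "nat \<Rightarrow> real"
  assumes "A' \<subset> A" "finite A" "\<forall>i\<in>A. w i > 0"
  shows "sum w A' < sum w A"
proof -
  have "A' \<subseteq> A" using assms by auto
  then have "sum w A = sum w (A - A') + sum w A'"
    using assms(2) by (rule sum.subset_diff)
  moreover have "sum w (A - A') > 0"
    using assms by (intro sum_pos) auto
  ultimately show ?thesis by simp
qed

lemma weight_le_imp_num_expressed_le:
  assumes "same_outside S M M'" "finite S" "card S \<le> 2" "\<forall>i\<in>{1..n}. w i > 0"
    "weight n w M \<le> weight n w M'"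
  shows "num_expressed n M \<le> num_expressed n M'"
proof (rule ccontr)
  assume fewer: "\<not> ?thesis"
  let ?A = "expressed_vars n M \<inter> S" and ?A' = "expressed_vars n M' \<inter> S"
  note same = expressed_vars_same_outside[OF assms(1)]
  have "card ?A' < card ?A"
    using fewer unfolding num_expressed_split[of n M S] num_expressed_split[of n M' S] same
    by linarith
  then have "?A' \<subset> ?A"
    using card_less_imp_psubset_in_pair[OF assms(2,3) Int_lower2 Int_lower2] by blast
  moreover have "\<forall>i\<in>?A. w i > 0" using assms(4) expressed_vars_subset[of n M] by blast
  ultimately have "sum w ?A' < sum w ?A" by (simp add: sum_psubset_less)
  then show False
    using assms(5) unfolding weight_split[of n w M S] weight_split[of n w M' S] same by linarith
qed

lemma weight_less_imp_num_expressed_less: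
  assumes "same_outside S M M'" "finite S" "card S \<le> 1" "\<forall>i\<in>{1..n}. w i > 0"
    "weight n w M < weight n w M'"
  shows "num_expressed n M < num_expressed n M'"
proof (rule ccontr)
  assume fewer: "\<not> ?thesis"
  let ?A = "expressed_vars n M \<inter> S" and ?A' = "expressed_vars n M' \<inter> S"
  note same = expressed_vars_same_outside[OF assms(1)]
  have "card ?A' \<le> card ?A"
    using fewer unfolding num_expressed_split[of n M S] num_expressed_split[of n M' S] same
    by linarith
  then have "?A' \<subseteq> ?A"
    using card_le_imp_subset_in_singleton[OF assms(2,3) Int_lower2 Int_lower2] by blast
  moreover have "\<forall>i\<in>?A. w i \<ge> 0" using assms(4) expressed_vars_subset[of n M] by force
  ultimately have "sum w ?A' \<le> sum w ?A" by (intro sum_mono2) auto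
  then show False
    using assms(5) unfolding weight_split[of n w M S] weight_split[of n w M' S] same by linarith
qed

lemma terminals_eq: "terminals n = {1..n} \<times> UNIV"
  by (auto simp: terminals_def)

lemma finite_terminals: "finite (terminals n)"
  by (simp add: terminals_eq)

lemma terminals_nonempty: "n \<ge> 1 \<Longrightarrow> terminals n \<noteq> {}"
  by (auto simp: terminals_eq)

definition one_edit :: "lit multiset \<Rightarrow> lit multiset \<Rightarrow> bool" where
  "one_edit M M' \<longleftrightarrow> M' = M \<or> (\<exists>u. M' = add_mset u M) \<or> (\<exists>a. a \<in># M \<and> M' = M - {#a#})
     \<or> (\<exists>a u. a \<in># M \<and> M' = add_mset u (M - {#a#}))"

lemma hvl_prime_one_edit:
  assumes "n \<ge> 1" "Y \<in> set_pmf (hvl_prime n X)"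
  shows "one_edit (leaf_mset X) (leaf_mset Y)"
proof (cases X)
  case None
  then show ?thesis using assms(2) terminals_nonempty[OF assms(1)] finite_terminals[of n]
    by (auto simp: hvl_prime_def one_edit_def leaf_mset_None leaf_mset_Some split: if_splits)
next
  case (Some t)
  have "{..<nleaves t} \<noteq> {}" "{..<nnodes t} \<noteq> {}"
    using leaves_nonempty[of t] by (auto simp: nleaves_def lessThan_empty_iff) (cases t; simp)
  with terminals_nonempty[OF assms(1)] finite_terminals[of n]
  consider (subst) k u where "k < length (leaves t)" "Y = Some (subst_leaf k u t)"
    | (insert) k u b where "Y = Some (ins_at k u b t)"
    | (delete) k where "k < length (leaves t)" "Y = del_leaf k t"
    using assms(2) Some by (auto simp: hvl_prime_def nleaves_def split: if_splits) blast+
  then show ?thesis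
  proof cases
    case subst
    then have "leaf_mset Y = add_mset u (leaf_mset X - {#leaves t ! k#})"
      and "leaves t ! k \<in># leaf_mset X"
      using Some by (simp_all add: leaf_mset_Some leaves_subst_leaf mset_update)
    then show ?thesis unfolding one_edit_def by blast
  next
    case insert
    then show ?thesis using Some by (auto simp: one_edit_def leaf_mset_Some mset_leaves_ins_at)
  next
    case delete
    then have "leaf_mset Y = leaf_mset X - {#leaves t ! k#}" and "leaves t ! k \<in># leaf_mset X"
      using Some mset_del_leaf[of k t] by (simp_all add: leaf_mset_def leaf_list_def)
    then show ?thesis unfolding one_edit_def by blast
  qed
qed

definition accepts :: "nat \<Rightarrow> (nat \<Rightarrow> real) \<Rightarrow> lit multiset \<Rightarrow> lit multiset \<Rightarrow> bool" where
  "accepts n w M M' \<longleftrightarrow> weight n w M < weight n w M'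
     \<or> (weight n w M' = weight n w M \<and> size M' \<le> size M)"

lemma accept_iff_accepts: "accept n w X Y \<longleftrightarrow> accepts n w (leaf_mset X) (leaf_mset Y)"
  by (simp add: accept_def accepts_def wmaj_eq_weight cplx_eq_nodes_of_leaves nodes_of_leaves_le_iff)

lemma accepted_edit_progress:
  assumes "\<forall>i\<in>{1..n}. w i > 0" "one_edit M M'" "accepts n w M M'"
  shows "num_expressed n M \<le> num_expressed n M' \<and> excess n M' \<le> excess n M
       \<and> (size M' < size M \<longrightarrow> excess n M' < excess n M)"
proof -
  note sizes = size_eq_excess_plus[of M n] size_eq_excess_plus[of M' n]
  from assms(2) consider (same) "M' = M" | (insert) u where "M' = add_mset u M"
    | (delete) a where "a \<in># M" "M' = M - {#a#}"
    | (replace) a u where "a \<in># M" "M' = add_mset u (M - {#a#})"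
    unfolding one_edit_def by blast
  then show ?thesis
  proof cases
    case same
    then show ?thesis by simp
  next
    case insert
    have "same_outside {fst u} M M'" using insert by (auto simp: same_outside_def)
    moreover have "weight n w M < weight n w M'" using assms(3) insert by (auto simp: accepts_def)
    ultimately have "num_expressed n M < num_expressed n M'"
      using weight_less_imp_num_expressed_less assms(1) by simp
    then show ?thesis using insert sizes by simp
  next
    case delete
    have "same_outside {fst a} M M'" using delete by (auto simp: same_outside_def)
    moreover have "weight n w M \<le> weight n w M'" using assms(3) by (auto simp: accepts_def)
    ultimately have "num_expressed n M \<le> num_expressed n M'"
      using weight_le_imp_num_expressed_le assms(1) by simp
    moreover have "size M' + 1 = size M" using delete by (metis insert_DiffM size_add_mset Suc_eq_plus1)
    ultimately show ?thesis using sizes by linarith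
  next
    case replace
    have "same_outside {fst a, fst u} M M'" using replace by (auto simp: same_outside_def)
    moreover have "card {fst a, fst u} \<le> 2" by (simp add: card_insert_le_m1)
    moreover have "weight n w M \<le> weight n w M'" using assms(3) by (auto simp: accepts_def)
    ultimately have "num_expressed n M \<le> num_expressed n M'"
      using weight_le_imp_num_expressed_le assms(1) by simp
    moreover have "size M' = size M" using replace by (metis insert_DiffM size_add_mset)
    ultimately show ?thesis using sizes by linarith
  qed
qed

text \<open>A tree without excess expressing all n variables is optimal: its weight is the total
  weight, and every tree of total weight needs at least n leaves.\<close>
lemma optimal_if_complete:
  assumes "\<forall>i\<in>{1..n}. w i > 0" "excess n (leaf_mset X) = 0" "num_expressed n (leaf_mset X) = n"
  shows "optimal n w X"
proof -
  have all: "expressed_vars n (leaf_mset X) = {1..n}"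
    using assms(3) expressed_vars_subset[of n "leaf_mset X"] unfolding num_expressed_def
    by (metis card_atLeastAtMost card_subset_eq diff_Suc_1 finite_atLeastAtMost)
  have wX: "wmaj n w X = sum w {1..n}" by (simp add: wmaj_eq_weight weight_def all)
  have max: "wmaj n w Y \<le> wmaj n w X" for Y
    unfolding wX unfolding wmaj_eq_weight weight_def using expressed_vars_subset assms(1)
    by (intro sum_mono2) (auto intro: less_imp_le)
  have min: "cplx X \<le> cplx Y" if same: "wmaj n w Y = wmaj n w X" for Y
  proof -
    have "expressed_vars n (leaf_mset Y) = {1..n}"
    proof (rule ccontr)
      assume "expressed_vars n (leaf_mset Y) \<noteq> {1..n}"
      then have "expressed_vars n (leaf_mset Y) \<subset> {1..n}" using expressed_vars_subset by blast
      then have "wmaj n w Y < sum w {1..n}"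
        using sum_psubset_less[of _ "{1..n}" w] assms(1) by (simp add: wmaj_eq_weight weight_def)
      then show False using same wX by simp
    qed
    then have "n \<le> size (leaf_mset Y)"
      using num_expressed_le_size[of n "leaf_mset Y"] by (simp add: num_expressed_def)
    then show ?thesis using assms(2,3) size_eq_excess_plus[of "leaf_mset X" n]
      by (simp add: cplx_eq_nodes_of_leaves nodes_of_leaves_le_iff)
  qed
  show ?thesis unfolding optimal_def using max min by auto
qed

section \<open>Probability of progress in one mutation\<close>

lemma emeasure_bind_pmf_ge:
  assumes "\<And>x. x \<in> B \<Longrightarrow> ennreal c \<le> emeasure (measure_pmf (f x)) A"
  shows "ennreal c * emeasure (measure_pmf p) B \<le> emeasure (measure_pmf (bind_pmf p f)) A"
proof -
  have "ennreal c * emeasure (measure_pmf p) B = (\<integral>\<^sup>+x. ennreal c * indicator B x \<partial>measure_pmf p)"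
    by (simp add: nn_integral_cmult_indicator)
  also have "\<dots> \<le> (\<integral>\<^sup>+x. emeasure (measure_pmf (f x)) A \<partial>measure_pmf p)"
    by (rule nn_integral_mono) (auto simp: indicator_def assms)
  also have "\<dots> = emeasure (measure_pmf (bind_pmf p f)) A" by simp
  finally show ?thesis .
qed

lemma emeasure_pmf_of_set_real:
  "finite S \<Longrightarrow> S \<noteq> {} \<Longrightarrow>
   emeasure (measure_pmf (pmf_of_set S)) B = ennreal (real (card (S \<inter> B)) / real (card S))"
  by (simp add: measure_pmf.emeasure_eq_measure measure_pmf_of_set)

lemma emeasure_bind_uniform_ge:
  assumes "finite S" "S \<noteq> {}" "\<And>x. x \<in> S \<inter> B \<Longrightarrow> set_pmf (f x) \<subseteq> G"
  shows "ennreal (real (card (S \<inter> B)) / real (card S))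
           \<le> emeasure (measure_pmf (bind_pmf (pmf_of_set S) f)) G"
proof -
  have "ennreal 1 \<le> emeasure (measure_pmf (f x)) G" if "x \<in> S \<inter> B" for x
    using assms(3)[OF that]
    by (simp add: measure_pmf.emeasure_eq_1_AE AE_measure_pmf_iff subset_eq)
  then have "ennreal 1 * emeasure (measure_pmf (pmf_of_set S)) (S \<inter> B)
             \<le> emeasure (measure_pmf (bind_pmf (pmf_of_set S) f)) G"
    by (rule emeasure_bind_pmf_ge)
  then show ?thesis using assms(1,2) by (simp add: emeasure_pmf_of_set_real Int_absorb1)
qed

lemma emeasure_choose_operator: "x \<in> {0, 1, 2} \<Longrightarrow>
  emeasure (measure_pmf (pmf_of_set {0::nat, 1, 2})) {x} = ennreal (1 / 3)"
  by (subst emeasure_pmf_of_set_real) auto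

lemma hvl_prime_deletion_ge:
  assumes "\<And>a Y. a \<in># leaf_mset X \<Longrightarrow> P a \<Longrightarrow> leaf_mset Y = leaf_mset X - {#a#} \<Longrightarrow> Y \<in> G"
  shows "ennreal (real (size (filter_mset P (leaf_mset X))) / real (size (leaf_mset X)) / 3)
           \<le> emeasure (measure_pmf (hvl_prime n X)) G"
proof (cases X)
  case None
  then show ?thesis by (simp add: leaf_mset_None)
next
  case (Some t)
  let ?ls = "leaves t"
  define B where "B = {k. k < length ?ls \<and> P (?ls ! k)}"
  have card_B: "card B = size (filter_mset P (leaf_mset X))"
    unfolding B_def Some leaf_mset_Some
    by (simp add: length_filter_conv_card[symmetric] mset_filter[symmetric] del: mset_filter)
  have "ennreal (real (card ({..<nleaves t} \<inter> B)) / real (card {..<nleaves t}))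
          \<le> emeasure (measure_pmf (bind_pmf (pmf_of_set {..<nleaves t})
                                            (\<lambda>k. return_pmf (del_leaf k t)))) G"
  proof (rule emeasure_bind_uniform_ge)
    show "{..<nleaves t} \<noteq> {}"
      using leaves_nonempty[of t] by (simp add: nleaves_def lessThan_empty_iff)
    fix k assume "k \<in> {..<nleaves t} \<inter> B"
    then have "k < length ?ls" "P (?ls ! k)" by (auto simp: B_def)
    moreover have "leaf_mset (del_leaf k t) = leaf_mset X - {#?ls ! k#}"
      using mset_del_leaf[OF \<open>k < length ?ls\<close>] Some by (simp add: leaf_mset_def leaf_list_def)
    moreover have "?ls ! k \<in># leaf_mset X" using \<open>k < length ?ls\<close> Some by (simp add: leaf_mset_Some)
    ultimately show "set_pmf (return_pmf (del_leaf k t)) \<subseteq> G" using assms by simp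
  qed simp
  moreover have "{..<nleaves t} \<inter> B = B" by (auto simp: B_def nleaves_def)
  ultimately have "ennreal (real (card B) / real (length ?ls)) * emeasure (measure_pmf (pmf_of_set {0::nat, 1, 2})) {2}
      \<le> emeasure (measure_pmf (hvl_prime n X)) G"
    unfolding hvl_prime_def by (intro emeasure_bind_pmf_ge) (simp add: Some nleaves_def)
  then show ?thesis
    using card_B Some emeasure_choose_operator[of 2]
    by (simp add: leaf_mset_Some ennreal_mult[symmetric])
qed

lemma hvl_prime_insertion_ge:
  assumes n: "n \<ge> 1"
    and good: "\<And>u Y. u \<in> U \<Longrightarrow> leaf_mset Y = add_mset u (leaf_mset X) \<Longrightarrow> Y \<in> G"
  shows "ennreal (real (card (terminals n \<inter> U)) / real (2 * n) / 3)
           \<le> emeasure (measure_pmf (hvl_prime n X)) G"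
proof -
  let ?T = "terminals n"
  define c where "c = real (card (?T \<inter> U)) / real (2 * n)"
  have card_T: "card ?T = 2 * n" by (simp add: terminals_eq card_cartesian_product)
  note uniform_T = emeasure_bind_uniform_ge[OF finite_terminals terminals_nonempty[OF n],
      of U, unfolded card_T, folded c_def]
  have none: "ennreal c \<le> emeasure (measure_pmf
      (bind_pmf (pmf_of_set ?T) (\<lambda>u. return_pmf (Some (Leaf u))))) G" if "X = None"
    by (rule uniform_T) (use good that in \<open>auto simp: leaf_mset_None leaf_mset_Some\<close>)
  have some: "ennreal c \<le> emeasure (measure_pmf
      (bind_pmf (pmf_of_set {..<nnodes t}) (\<lambda>k. bind_pmf (pmf_of_set ?T) (\<lambda>u.
         bind_pmf (pmf_of_set UNIV) (\<lambda>b. return_pmf (Some (ins_at k u b t))))))) G"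
    if "X = Some t" for t
  proof -
    have "ennreal c \<le> emeasure (measure_pmf (bind_pmf (pmf_of_set ?T) (\<lambda>u.
            bind_pmf (pmf_of_set UNIV) (\<lambda>b. return_pmf (Some (ins_at k u b t)))))) G" for k
      by (rule uniform_T) (use good that in \<open>auto simp: leaf_mset_Some mset_leaves_ins_at\<close>)
    then have "ennreal c * emeasure (measure_pmf (pmf_of_set {..<nnodes t})) UNIV
      \<le> emeasure (measure_pmf (bind_pmf (pmf_of_set {..<nnodes t}) (\<lambda>k. bind_pmf (pmf_of_set ?T)
           (\<lambda>u. bind_pmf (pmf_of_set UNIV) (\<lambda>b. return_pmf (Some (ins_at k u b t))))))) G"
      by (intro emeasure_bind_pmf_ge)
    then show ?thesis by (simp add: measure_pmf.emeasure_space_1[simplified])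
  qed
  have "ennreal c * emeasure (measure_pmf (pmf_of_set {0::nat, 1, 2})) {1}
      \<le> emeasure (measure_pmf (hvl_prime n X)) G"
    unfolding hvl_prime_def by (rule emeasure_bind_pmf_ge) (cases X; use none some in simp)
  then show ?thesis
    using emeasure_choose_operator[of 1] by (simp add: c_def ennreal_mult[symmetric])
qed

definition removable :: "nat \<Rightarrow> (nat \<Rightarrow> real) \<Rightarrow> lit multiset \<Rightarrow> lit \<Rightarrow> bool" where
  "removable n w M a \<longleftrightarrow> weight n w M \<le> weight n w (M - {#a#})"

text \<open>Expressed variables that a single deletion of a positive literal would unexpress.\<close>
definition critical_vars :: "nat \<Rightarrow> lit multiset \<Rightarrow> nat set" where
  "critical_vars n M = {i \<in> expressed_vars n M. pos_count M i = 1 \<or> pos_count M i = neg_count M i}"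

lemma weight_mono:
  assumes "expressed_vars n M \<subseteq> expressed_vars n M'" "\<forall>i\<in>{1..n}. w i > 0"
  shows "weight n w M \<le> weight n w M'"
  unfolding weight_def using assms expressed_vars_subset[of n M']
  by (intro sum_mono2) (auto intro: less_imp_le)

lemma non_removable_leaf:
  assumes "a \<in># M" "\<not> removable n w M a" "\<forall>i\<in>{1..n}. w i > 0"
  shows "snd a \<and> fst a \<in> critical_vars n M"
proof -
  obtain i c where a: "a = (i, c)" by (cases a)
  let ?M' = "M - {#a#}"
  have "same_outside {i} M ?M'" using a by (auto simp: same_outside_def)
  note same = expressed_vars_same_outside[OF this]
  have lost: "i \<in> expressed_vars n M \<and> i \<notin> expressed_vars n ?M'"
  proof (rule ccontr)
    assume "\<not> ?thesis"
    then have "expressed_vars n M \<subseteq> expressed_vars n ?M'" using same by blast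
    then show False using assms(2,3) weight_mono unfolding removable_def by blast
  qed
  show ?thesis
  proof (cases c)
    case False
    then have "pos_count ?M' i = pos_count M i" "neg_count ?M' i = neg_count M i - 1"
      using a by (auto simp: pos_count_def neg_count_def)
    then have "expressed ?M' i" using lost by (auto simp: expressed_vars_def expressed_def)
    then show ?thesis using lost by (auto simp: expressed_vars_def)
  next
    case True
    then have "pos_count ?M' i = pos_count M i - 1" "neg_count ?M' i = neg_count M i"
      using a by (auto simp: pos_count_def neg_count_def)
    then have "pos_count M i = 1 \<or> pos_count M i = neg_count M i"
      using lost unfolding expressed_vars_def expressed_def by auto
    then show ?thesis using lost a True by (simp add: critical_vars_def)
  qed
qed

lemma size_positive_leaves:
  "finite N \<Longrightarrow> size (filter_mset (\<lambda>a. snd a \<and> fst a \<in> N) M) = (\<Sum>i\<in>N. pos_count M i)"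
proof (induction M)
  case empty
  then show ?case by (simp add: pos_count_def)
next
  case (add x M)
  obtain j c where x: "x = (j, c)" by (cases x)
  have "(\<Sum>i\<in>N. pos_count (add_mset x M) i)
        = (\<Sum>i\<in>N. pos_count M i) + (\<Sum>i\<in>N. if i = j \<and> c then 1 else 0)"
    by (auto simp: x pos_count_def sum.distrib[symmetric] intro!: sum.cong)
  also have "(\<Sum>i\<in>N. if i = j \<and> c then 1 else 0) = (if j \<in> N \<and> c then 1 else (0::nat))"
    using add.prems by (cases c) (simp_all add: sum.delta)
  finally show ?case using add x by auto
qed

text \<open>At most about half of the non-needed leaves are non-removable: a critical variable i has
  2 pos_count \<le> pos_count + neg_count + 1, and there are at most R critical variables.\<close>
lemma size_le_removable:
  assumes "\<forall>i\<in>{1..n}. w i > 0"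
  shows "size M \<le> 2 * size (filter_mset (removable n w M) M) + num_expressed n M"
proof -
  let ?N = "critical_vars n M" and ?keep = "filter_mset (\<lambda>a. \<not> removable n w M a) M"
  have finN: "finite ?N" by (simp add: critical_vars_def)
  have "?keep \<subseteq># filter_mset (\<lambda>a. snd a \<and> fst a \<in> ?N) M"
    by (rule filter_mset_mono_strong) (use non_removable_leaf[OF _ _ assms] in auto)
  then have keep: "size ?keep \<le> (\<Sum>i\<in>?N. pos_count M i)"
    using size_positive_leaves[OF finN, of M] by (metis size_mset_mono)
  have split: "size M = size (filter_mset (removable n w M) M) + size ?keep"
    by (metis multiset_partition size_union)
  have "2 * (\<Sum>i\<in>?N. pos_count M i) = (\<Sum>i\<in>?N. 2 * pos_count M i)"
    by (simp add: sum_distrib_left)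
  also have "\<dots> \<le> (\<Sum>i\<in>?N. pos_count M i + neg_count M i + 1)"
    by (rule sum_mono) (auto simp: critical_vars_def expressed_vars_def expressed_def)
  also have "\<dots> = (\<Sum>i\<in>?N. pos_count M i + neg_count M i) + card ?N"
    by (simp only: sum.distrib card_eq_sum)
  also have "\<dots> \<le> size M + num_expressed n M"
  proof (rule add_mono)
    show "(\<Sum>i\<in>?N. pos_count M i + neg_count M i) \<le> size M" by (rule sum_counts_le_size[OF finN])
    show "card ?N \<le> num_expressed n M"
      unfolding num_expressed_def critical_vars_def by (rule card_mono) auto
  qed
  finally show ?thesis using keep split by linarith
qed

lemma insert_missing_var:
  assumes "excess n M = 0" "i \<in> {1..n}" "i \<notin> expressed_vars n M" "\<forall>i\<in>{1..n}. w i > 0"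
  shows "weight n w M < weight n w (add_mset (i, True) M)
       \<and> num_expressed n M < num_expressed n (add_mset (i, True) M)"
proof -
  let ?M' = "add_mset (i, True) M"
  have absent: "pos_count M i = 0 \<and> neg_count M i = 0"
    using no_excess_unexpressed_absent[OF assms(1-3)] .
  have "same_outside {i} M ?M'" by (auto simp: same_outside_def)
  note same = expressed_vars_same_outside[OF this]
  have "expressed ?M' i" using absent by (simp add: expressed_def pos_count_def neg_count_def)
  then have "i \<in> expressed_vars n ?M'" using assms(2) by (simp add: expressed_vars_def)
  then have new: "expressed_vars n ?M' = insert i (expressed_vars n M)"
    using same assms(3) by blast
  show ?thesis
    using assms(2-4) by (simp add: weight_def num_expressed_def new)
qed

lemma prob_excess_decrease:
  fixes X :: "stree option"
  assumes "\<forall>i\<in>{1..n}. w i > 0"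
  defines "M \<equiv> leaf_mset X"
  shows "ennreal (real (excess n M) / real (size M) / 6)
     \<le> emeasure (measure_pmf (hvl_prime n X))
          {Y. accepts n w M (leaf_mset Y) \<and> excess n (leaf_mset Y) < excess n M}"
proof -
  let ?D = "size (filter_mset (removable n w M) M)"
  have frac: "real k / real l / 6 \<le> real d / real l / 3" if "real k \<le> 2 * real d" for k d l :: nat
    using that by (cases "l = 0") (simp_all add: field_simps)
  have "real (excess n M) \<le> 2 * real ?D"
    using size_le_removable[OF assms(1), of M] size_eq_excess_plus[of M n] by simp
  then have "ennreal (real (excess n M) / real (size M) / 6) \<le> ennreal (real ?D / real (size M) / 3)"
    using frac by (intro ennreal_leI) blast
  also have "\<dots> \<le> emeasure (measure_pmf (hvl_prime n X))
          {Y. accepts n w M (leaf_mset Y) \<and> excess n (leaf_mset Y) < excess n M}"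
    unfolding M_def
  proof (rule hvl_prime_deletion_ge, safe)
    fix a Y assume a: "a \<in># leaf_mset X" "removable n w (leaf_mset X) a"
      and Y: "leaf_mset Y = leaf_mset X - {#a#}"
    have smaller: "size (leaf_mset Y) < size (leaf_mset X)"
      using Y a(1) by (simp add: size_Diff1_less)
    show acc: "accepts n w (leaf_mset X) (leaf_mset Y)"
      using a(2) Y smaller by (auto simp: accepts_def removable_def)
    have "one_edit (leaf_mset X) (leaf_mset Y)" using a(1) Y unfolding one_edit_def by blast
    then show "excess n (leaf_mset Y) < excess n (leaf_mset X)"
      using accepted_edit_progress[OF assms(1) _ acc] smaller by blast
  qed
  finally show ?thesis .
qed

lemma prob_expressed_increase:
  fixes X :: "stree option"
  assumes "n \<ge> 1" "\<forall>i\<in>{1..n}. w i > 0"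
  defines "M \<equiv> leaf_mset X"
  assumes "excess n M = 0"
  shows "ennreal (real (n - num_expressed n M) / real (2 * n) / 3)
     \<le> emeasure (measure_pmf (hvl_prime n X))
          {Y. accepts n w M (leaf_mset Y) \<and> num_expressed n M < num_expressed n (leaf_mset Y)}"
proof -
  define U where "U = (\<lambda>i. (i, True)) ` ({1..n} - expressed_vars n M)"
  have "U \<subseteq> terminals n" by (auto simp: U_def terminals_eq)
  then have "card (terminals n \<inter> U) = card U" by (simp add: inf.absorb2)
  also have "\<dots> = card ({1..n} - expressed_vars n M)"
    unfolding U_def by (rule card_image) (simp add: inj_on_def)
  also have "\<dots> = n - num_expressed n M"
    using expressed_vars_subset[of n M] by (simp add: num_expressed_def card_Diff_subset)
  finally have "real (n - num_expressed n M) = real (card (terminals n \<inter> U))" by simp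
  moreover have "ennreal (real (card (terminals n \<inter> U)) / real (2 * n) / 3)
     \<le> emeasure (measure_pmf (hvl_prime n X))
          {Y. accepts n w M (leaf_mset Y) \<and> num_expressed n M < num_expressed n (leaf_mset Y)}"
  proof (rule hvl_prime_insertion_ge[OF assms(1)])
    fix u Y assume "u \<in> U" and Y: "leaf_mset Y = add_mset u (leaf_mset X)"
    then obtain i where "u = (i, True)" "i \<in> {1..n}" "i \<notin> expressed_vars n M"
      by (auto simp: U_def)
    then show "Y \<in> {Y. accepts n w M (leaf_mset Y) \<and> num_expressed n M < num_expressed n (leaf_mset Y)}"
      using insert_missing_var[OF assms(4) _ _ assms(2)] Y by (simp add: M_def accepts_def)
  qed
  ultimately show ?thesis by simp
qed

section \<open>The potential function and its drift\<close>

text \<open>Potential: the (coupon-collector style) expected time to remove K excess leaves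
  and then to collect the n - R missing variables.\<close>
definition potential :: "nat \<Rightarrow> lit multiset \<Rightarrow> real" where
  "potential n M = 6 * (real (excess n M) + real n * harm (excess n M)
                        + real n * harm (n - num_expressed n M))"

lemma potential_nonneg: "potential n M \<ge> 0"
  unfolding potential_def by (simp add: harm_nonneg)

lemma potential_mono:
  assumes "excess n M' \<le> excess n M" "num_expressed n M \<le> num_expressed n M'"
  shows "potential n M' \<le> potential n M"
  unfolding potential_def using assms
  by (intro add_mono mult_left_mono harm_mono) auto

lemma potential_drop_excess:
  assumes "excess n M' < excess n M" "num_expressed n M \<le> num_expressed n M'"
  shows "potential n M' + (6 + 6 * real n / real (excess n M)) \<le> potential n M"
proof -
  obtain k where k: "excess n M = Suc k" "excess n M' \<le> k"
    using assms(1) by (cases "excess n M") auto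
  have "real n * harm (excess n M') \<le> real n * harm k"
    using k(2) by (intro mult_left_mono harm_mono) auto
  moreover have "real n * harm (n - num_expressed n M') \<le> real n * harm (n - num_expressed n M)"
    using assms(2) by (intro mult_left_mono harm_mono) auto
  moreover have "real n * harm (excess n M) = real n * harm k + real n / real (excess n M)"
    using k(1) by (simp add: harm_Suc inverse_eq_divide algebra_simps)
  ultimately show ?thesis using k unfolding potential_def by simp
qed

lemma potential_drop_missing:
  assumes "excess n M' \<le> excess n M" "num_expressed n M < num_expressed n M'"
    "num_expressed n M' \<le> n"
  shows "potential n M' + 6 * real n / real (n - num_expressed n M) \<le> potential n M"
proof -
  obtain k where k: "n - num_expressed n M = Suc k" "n - num_expressed n M' \<le> k"
    using assms(2,3) by (cases "n - num_expressed n M") auto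
  have "real n * harm (n - num_expressed n M') \<le> real n * harm k"
    using k(2) by (intro mult_left_mono harm_mono) auto
  moreover have "real n * harm (excess n M') \<le> real n * harm (excess n M)"
    using assms(1) by (intro mult_left_mono harm_mono) auto
  moreover have "real n * harm (n - num_expressed n M)
      = real n * harm k + real n / real (n - num_expressed n M)"
    using k(1) by (simp add: harm_Suc inverse_eq_divide algebra_simps)
  ultimately show ?thesis using assms(1) unfolding potential_def by simp
qed

lemma nn_integral_drift:
  fixes f :: "'a \<Rightarrow> real"
  assumes le: "\<And>Y. Y \<in> set_pmf p \<Longrightarrow> 0 \<le> f Y \<and> f Y \<le> v"
    and drop: "\<And>Y. Y \<in> set_pmf p \<Longrightarrow> Y \<in> G \<Longrightarrow> f Y + d \<le> v"
    and prob: "ennreal q \<le> emeasure (measure_pmf p) G"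
    and dq: "1 \<le> d * q" "0 \<le> d" "0 \<le> q"
  shows "(\<integral>\<^sup>+Y. ennreal (f Y) \<partial>measure_pmf p) + 1 \<le> ennreal v"
proof -
  have pointwise: "ennreal (f Y) + ennreal d * indicator G Y \<le> ennreal v" if "Y \<in> set_pmf p" for Y
    using le[OF that] drop[OF that] dq(2)
    by (cases "Y \<in> G") (simp_all add: ennreal_plus[symmetric] del: ennreal_plus)
  have "1 \<le> ennreal d * ennreal q"
    using dq by (simp add: ennreal_mult[symmetric] ennreal_1[symmetric] del: ennreal_1)
  also have "\<dots> \<le> ennreal d * emeasure (measure_pmf p) G" by (rule mult_left_mono[OF prob]) simp
  finally have one: "1 \<le> ennreal d * emeasure (measure_pmf p) G" .
  have "(\<integral>\<^sup>+Y. ennreal (f Y) \<partial>measure_pmf p) + ennreal d * emeasure (measure_pmf p) G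
      = (\<integral>\<^sup>+Y. ennreal (f Y) + ennreal d * indicator G Y \<partial>measure_pmf p)"
    by (simp add: nn_integral_add nn_integral_cmult_indicator)
  also have "\<dots> \<le> (\<integral>\<^sup>+Y. ennreal v \<partial>measure_pmf p)"
    by (rule nn_integral_mono_AE) (simp add: AE_measure_pmf_iff pointwise)
  also have "\<dots> = ennreal v" by simp
  finally show ?thesis using one by (meson add_left_mono order_trans)
qed

lemma gp_step_drift_from_event:
  assumes n: "n \<ge> 1" and wpos: "\<forall>i\<in>{1..n}. w i > 0"
    and drop: "\<And>Y. Y \<in> set_pmf (hvl_prime n X) \<Longrightarrow> Y \<in> G \<Longrightarrow>
                 accept n w X Y \<and> potential n (leaf_mset Y) + d \<le> potential n (leaf_mset X)"
    and prob: "ennreal q \<le> emeasure (measure_pmf (hvl_prime n X)) G"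
    and dq: "1 \<le> d * q" "0 \<le> d" "0 \<le> q"
  shows "(\<integral>\<^sup>+Y. ennreal (potential n (leaf_mset Y)) \<partial>measure_pmf (gp_step n w X)) + 1
           \<le> ennreal (potential n (leaf_mset X))"
proof -
  define f where "f Y = potential n (leaf_mset (if accept n w X Y then Y else X))" for Y
  have le: "0 \<le> f Y \<and> f Y \<le> potential n (leaf_mset X)" if "Y \<in> set_pmf (hvl_prime n X)" for Y
  proof (cases "accept n w X Y")
    case True
    then show ?thesis
      using accepted_edit_progress[OF wpos hvl_prime_one_edit[OF n that]] potential_mono
      by (auto simp: f_def accept_iff_accepts potential_nonneg)
  qed (simp add: f_def potential_nonneg)
  have "(\<integral>\<^sup>+Y. ennreal (f Y) \<partial>measure_pmf (hvl_prime n X)) + 1 \<le> ennreal (potential n (leaf_mset X))"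
    by (rule nn_integral_drift[OF le _ prob dq]) (use drop in \<open>auto simp: f_def\<close>)
  then show ?thesis by (simp add: gp_step_def f_def)
qed

lemma gp_step_drift:
  assumes n: "n \<ge> 1" and wpos: "\<forall>i\<in>{1..n}. w i > 0"
    and not_done: "excess n (leaf_mset X) \<noteq> 0 \<or> num_expressed n (leaf_mset X) \<noteq> n"
  shows "(\<integral>\<^sup>+Y. ennreal (potential n (leaf_mset Y)) \<partial>measure_pmf (gp_step n w X)) + 1
           \<le> ennreal (potential n (leaf_mset X))"
proof -
  let ?M = "leaf_mset X"
  have progress: "num_expressed n ?M \<le> num_expressed n (leaf_mset Y)
      \<and> excess n (leaf_mset Y) \<le> excess n ?M"
    if "Y \<in> set_pmf (hvl_prime n X)" "accepts n w ?M (leaf_mset Y)" for Y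
    using accepted_edit_progress[OF wpos hvl_prime_one_edit[OF n that(1)] that(2)] by blast
  have R_le: "num_expressed n ?M \<le> n" by (rule num_expressed_le_n)
  show ?thesis
  proof (cases "excess n ?M = 0")
    case False
    let ?K = "real (excess n ?M)" and ?L = "real (size ?M)"
    have L: "?L = ?K + real (num_expressed n ?M)" "?K > 0"
      using size_eq_excess_plus[of ?M n] False by simp_all
    show ?thesis
    proof (rule gp_step_drift_from_event[OF n wpos _ prob_excess_decrease[OF wpos]])
      show "accept n w X Y \<and> potential n (leaf_mset Y) + (6 + 6 * real n / ?K) \<le> potential n ?M"
        if "Y \<in> set_pmf (hvl_prime n X)"
          "Y \<in> {Y. accepts n w ?M (leaf_mset Y) \<and> excess n (leaf_mset Y) < excess n ?M}" for Y
        using that progress potential_drop_excess by (auto simp: accept_iff_accepts)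
      have frac: "(6 + x / k) * (k / l / 6) = (k + x / 6) / l" if "k > 0" for k l x :: real
        using that by (cases "l = 0") (simp_all add: field_simps)
      have "(6 + 6 * real n / ?K) * (?K / ?L / 6) = (?K + real n) / ?L"
        using frac[of ?K "6 * real n" ?L] L by simp
      moreover have "?L \<le> ?K + real n" "?L > 0" using L R_le by simp_all
      ultimately show "1 \<le> (6 + 6 * real n / ?K) * (?K / ?L / 6)" by (simp add: le_divide_eq)
    qed (simp_all add: L)
  next
    case True
    let ?m = "real (n - num_expressed n ?M)"
    have m: "?m > 0" using True not_done R_le by simp
    show ?thesis
    proof (rule gp_step_drift_from_event[OF n wpos _ prob_expressed_increase[OF n wpos True]])
      show "accept n w X Y \<and> potential n (leaf_mset Y) + 6 * real n / ?m \<le> potential n ?M"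
        if "Y \<in> set_pmf (hvl_prime n X)" "Y \<in> {Y. accepts n w ?M (leaf_mset Y)
             \<and> num_expressed n ?M < num_expressed n (leaf_mset Y)}" for Y
        using that progress potential_drop_missing num_expressed_le_n
        by (auto simp: accept_iff_accepts)
    qed (use m n in \<open>simp_all add: field_simps\<close>)
  qed
qed

section \<open>Additive drift for the stopped process\<close>

definition stopped_step :: "nat \<Rightarrow> (nat \<Rightarrow> real) \<Rightarrow> stree option \<Rightarrow> stree option pmf" where
  "stopped_step n w X = (if optimal n w X then return_pmf X else gp_step n w X)"

lemma stopped_run_0: "stopped_run n w X0 0 = return_pmf X0"
  by (simp add: stopped_run_def)

lemma stopped_run_Suc: "stopped_run n w X0 (Suc t) = bind_pmf (stopped_run n w X0 t) (stopped_step n w)"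
proof -
  have "stopped_step n w = (\<lambda>X. if optimal n w X then return_pmf X else gp_step n w X)"
    by (rule ext) (simp add: stopped_step_def)
  then show ?thesis by (simp add: stopped_run_def)
qed

lemma stopped_step_drift:
  assumes "n \<ge> 1" "\<forall>i\<in>{1..n}. w i > 0"
  shows "(\<integral>\<^sup>+Y. ennreal (potential n (leaf_mset Y)) \<partial>measure_pmf (stopped_step n w X))
           + indicator {X. \<not> optimal n w X} X \<le> ennreal (potential n (leaf_mset X))"
proof (cases "optimal n w X")
  case False
  then have "excess n (leaf_mset X) \<noteq> 0 \<or> num_expressed n (leaf_mset X) \<noteq> n"
    using optimal_if_complete[OF assms(2)] by blast
  then show ?thesis using gp_step_drift[OF assms] False by (simp add: stopped_step_def)
qed (simp add: stopped_step_def)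

lemma stopped_run_drift:
  assumes "n \<ge> 1" "\<forall>i\<in>{1..n}. w i > 0"
  shows "(\<Sum>t<T. ennreal (measure_pmf.prob (stopped_run n w X0 t) {X. \<not> optimal n w X}))
     + (\<integral>\<^sup>+Y. ennreal (potential n (leaf_mset Y)) \<partial>measure_pmf (stopped_run n w X0 T))
     \<le> ennreal (potential n (leaf_mset X0))"
proof (induction T)
  case 0
  then show ?case by (simp add: stopped_run_0)
next
  case (Suc T)
  let ?p = "stopped_run n w X0 T" and ?A = "{X. \<not> optimal n w X}"
  let ?E = "\<lambda>p. \<integral>\<^sup>+Y. ennreal (potential n (leaf_mset Y)) \<partial>measure_pmf p"
  have "?E (stopped_run n w X0 (Suc T)) + ennreal (measure_pmf.prob ?p ?A)
     = (\<integral>\<^sup>+X. ?E (stopped_step n w X) + indicator ?A X \<partial>measure_pmf ?p)"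
    by (simp add: stopped_run_Suc nn_integral_add measure_pmf.emeasure_eq_measure[symmetric])
  also have "\<dots> \<le> ?E ?p"
    by (rule nn_integral_mono) (rule stopped_step_drift[OF assms])
  finally have step: "?E (stopped_run n w X0 (Suc T)) + ennreal (measure_pmf.prob ?p ?A) \<le> ?E ?p" .
  have "(\<Sum>t<Suc T. ennreal (measure_pmf.prob (stopped_run n w X0 t) ?A)) + ?E (stopped_run n w X0 (Suc T))
     = (\<Sum>t<T. ennreal (measure_pmf.prob (stopped_run n w X0 t) ?A))
       + (?E (stopped_run n w X0 (Suc T)) + ennreal (measure_pmf.prob ?p ?A))"
    by (simp add: ac_simps)
  also have "\<dots> \<le> (\<Sum>t<T. ennreal (measure_pmf.prob (stopped_run n w X0 t) ?A)) + ?E ?p"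
    using step by (rule add_left_mono)
  also have "\<dots> \<le> ennreal (potential n (leaf_mset X0))" using Suc .
  finally show ?case .
qed

lemma opt_time_le_potential:
  assumes "n \<ge> 1" "\<forall>i\<in>{1..n}. w i > 0"
  shows "opt_time n w X0 \<le> ennreal (potential n (leaf_mset X0))"
  unfolding opt_time_def
proof (rule suminf_le_const)
  fix T
  show "(\<Sum>t<T. ennreal (measure_pmf.prob (stopped_run n w X0 t) {X. \<not> optimal n w X}))
      \<le> ennreal (potential n (leaf_mset X0))"
    using stopped_run_drift[OF assms, where T = T] by (rule order_trans[rotated]) simp
qed simp

section \<open>Bounding the initial potential\<close>

lemma harm_le_1_plus_ln: "m \<ge> 1 \<Longrightarrow> (harm m :: real) \<le> 1 + ln (real m)"
proof (induction m rule: dec_induct)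
  case base
  then show ?case by (simp add: harm_def)
next
  case (step m)
  have m: "real m > 0" using step by simp
  have "ln (real m / real (Suc m)) \<le> real m / real (Suc m) - 1"
    using m by (intro ln_le_minus_one) simp
  moreover have "ln (real m / real (Suc m)) = ln (real m) - ln (real (Suc m))"
    using m by (simp add: ln_div)
  moreover have "real m / real (Suc m) - 1 = - (1 / real (Suc m))" by (simp add: field_simps)
  ultimately have "ln (real m) + 1 / real (Suc m) \<le> ln (real (Suc m))" by linarith
  then show ?case using step by (simp add: harm_Suc inverse_eq_divide)
qed

text \<open>Two consequences of ln x \<le> x - 1, at x = 1/n and at x = L / n^2.\<close>
lemma n_le_n_ln_n: "n \<ge> 1 \<Longrightarrow> real n \<le> real n * ln (real n) + 1"
proof -
  assume n: "n \<ge> 1"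
  then have "ln (1 / real n) \<le> 1 / real n - 1" by (intro ln_le_minus_one) simp
  then have "real n * (- ln (real n)) \<le> real n * (1 / real n - 1)"
    using n by (intro mult_left_mono) (simp_all add: ln_div)
  then show ?thesis using n by (simp add: algebra_simps)
qed

lemma n_ln_le:
  assumes "n \<ge> 1" "L \<ge> 1"
  shows "real n * ln (real L) \<le> real L + 2 * (real n * ln (real n))"
proof -
  have n: "real n > 0" and L: "real L > 0" using assms by auto
  have "ln (real L / (real n)^2) \<le> real L / (real n)^2 - 1"
    using n L by (intro ln_le_minus_one) simp
  moreover have "ln (real L / (real n)^2) = ln (real L) - 2 * ln (real n)"
    using n L by (simp add: ln_div ln_realpow)
  ultimately have "real n * ln (real L) \<le> real n * (real L / (real n)^2 + 2 * ln (real n))"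
    using n by (intro mult_left_mono) auto
  also have "\<dots> = real L / real n + 2 * (real n * ln (real n))"
    using n by (simp add: field_simps power2_eq_square)
  also have "real L / real n \<le> real L" using n L assms(1) by (simp add: divide_le_eq)
  finally show ?thesis by simp
qed

lemma n_harm_le:
  assumes "n \<ge> 1"
  shows "real n * harm L \<le> real n + real L + 2 * (real n * ln (real n))"
proof (cases "L = 0")
  case True
  then show ?thesis using assms by (simp add: harm_def)
next
  case False
  then have "real n * harm L \<le> real n * (1 + ln (real L))"
    using harm_le_1_plus_ln[of L] by (intro mult_left_mono) auto
  then show ?thesis using n_ln_le[OF assms, of L] False by (simp add: algebra_simps)
qed

lemma potential_le:
  assumes "n \<ge> 1"
  shows "potential n M \<le> 42 * (real (nodes_of_leaves (size M)) + real n * ln (real n) + 1)"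
proof -
  let ?L = "size M"
  have "real n * harm (excess n M) \<le> real n * harm ?L"
    and "real n * harm (n - num_expressed n M) \<le> real n * harm n"
    by (intro mult_left_mono harm_mono; simp add: excess_def)+
  then have "potential n M \<le> 6 * (real ?L + real n * harm ?L + real n * harm n)"
    unfolding potential_def using num_expressed_le_size[of n M] by (simp add: excess_def)
  moreover have "real ?L \<le> real (nodes_of_leaves ?L)" by (cases ?L) (simp_all add: nodes_of_leaves_def)
  moreover have "0 \<le> real n * ln (real n)" using assms by simp
  moreover have "0 \<le> real ?L" by simp
  ultimately show ?thesis
    using n_harm_le[OF assms, of ?L] n_harm_le[OF assms, of n] n_le_n_ln_n[OF assms] by argo
qed

theorem theorem3:
  shows "\<exists>c::real. c > 0 \<and>
    (\<forall>n::nat. \<forall>w::nat \<Rightarrow> real. \<forall>X0::stree option.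
       n \<ge> 1 \<longrightarrow>
       (\<forall>i\<in>{1..n}. w i > 0) \<longrightarrow>
       (\<forall>i j. 1 \<le> i \<longrightarrow> i \<le> j \<longrightarrow> j \<le> n \<longrightarrow> w j \<le> w i) \<longrightarrow>
       over_T n X0 \<longrightarrow>
       opt_time n w X0 \<le> ennreal (c * (real (cplx X0) + real n * ln (real n) + 1)))"
proof (intro exI[of _ 42] conjI allI impI)
  fix n :: nat and w :: "nat \<Rightarrow> real" and X0 :: "stree option"
  assume n: "n \<ge> 1" and wpos: "\<forall>i\<in>{1..n}. w i > 0"
  have "opt_time n w X0 \<le> ennreal (potential n (leaf_mset X0))"
    by (rule opt_time_le_potential[OF n wpos])
  also have "\<dots> \<le> ennreal (42 * (real (cplx X0) + real n * ln (real n) + 1))"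
    using potential_le[OF n] by (simp add: cplx_eq_nodes_of_leaves ennreal_leI)
  finally show "opt_time n w X0 \<le> ennreal (42 * (real (cplx X0) + real n * ln (real n) + 1))" .
qed simp

end
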